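(* ($I\Sigma_1$) Let $X\subseteq\mathbb{N}$ be finite, $\omega^{n+3}$-large and $\omega^3$-sparse, and let $c\in\mathbb{N}$ with $c\le\min X$. Then $X$ admits an $(\omega^n,c)$-grouping for $\min X$ colors.
   Context: $\alpha$-largeness for $\alpha<\omega^\omega$: writing ordinals in Cantor normal form, $0[m]=0$, $(\beta+1)[m]=\beta$, $(\beta+\omega^n)[m]=\beta+\omega^{n-1}\cdot m$ for $n\ge1$; a finite $\{x_0<\dots<x_{\ell-1}\}$ is $\alpha$-large if $\alpha[x_0]\cdots[x_{\ell-1}]=0$ (so for a natural number $c$, $c$-large means having at least $c$ elements). $X$ is \emph{$\alpha$-sparse} if $\min X>3$ and for all $x<y$ in $X$ the interval $[x,y)$ is $\alpha$-large. For $P:[X]^2\to\{0,\dots,\min X-1\}$, a finite sequence $\langle F_i\subseteq X:i<l\rangle$ is an \emph{$(\alpha,\beta)$-grouping for $P$} if $\max F_i<\min F_j$ for $i<j$, each $F_i$ is $\alpha$-large, $\{\max F_i:i<l\}$ is $\beta$-large, and $P(x,y)=P(x',y')$ whenever $i<j<l$, $x,x'\in F_i$, $y,y'\in F_j$. $X$ \emph{admits an $(\alpha,\beta)$-grouping for $k$ colors} if every $P:[X]^2\to\{0,\dots,k-1\}$ has one. *)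

theory Defs
  imports Main
begin

text \<open>Ordinals below omega^omega in Cantor normal form:
  the list [e1,...,ek] (e1 \<ge> ... \<ge> ek) represents omega^e1 + ... + omega^ek;
  the empty list is 0.\<close>

type_synonym ord_cnf = "nat list"

definition cnf_ok :: "ord_cnf \<Rightarrow> bool" where
  "cnf_ok a \<longleftrightarrow> sorted_wrt (\<ge>) a"

definition om_pow :: "nat \<Rightarrow> ord_cnf" where
  "om_pow n = [n]"

definition ord_nat :: "nat \<Rightarrow> ord_cnf" where
  "ord_nat c = replicate c 0"

text \<open>Fundamental sequences: 0[m]=0, (b+1)[m]=b, (b+omega^(n+1))[m]=b+omega^n*m.\<close>

definition fund :: "ord_cnf \<Rightarrow> nat \<Rightarrow> ord_cnf" where
  "fund a m = (if a = [] then []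
     else (case last a of 0 \<Rightarrow> butlast a | Suc n \<Rightarrow> butlast a @ replicate m n))"

definition large :: "ord_cnf \<Rightarrow> nat set \<Rightarrow> bool" where
  "large a X \<longleftrightarrow> finite X \<and> foldl fund a (sorted_list_of_set X) = []"

definition sparse :: "ord_cnf \<Rightarrow> nat set \<Rightarrow> bool" where
  "sparse a X \<longleftrightarrow> X \<noteq> {} \<and> Min X > 3 \<and>
     (\<forall>x\<in>X. \<forall>y\<in>X. x < y \<longrightarrow> large a {x..<y})"

definition grouping :: "ord_cnf \<Rightarrow> ord_cnf \<Rightarrow> (nat \<Rightarrow> nat \<Rightarrow> nat) \<Rightarrow> nat set
    \<Rightarrow> (nat \<Rightarrow> nat set) \<Rightarrow> nat \<Rightarrow> bool" where
  "grouping a b P X F l \<longleftrightarrow>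
     (\<forall>i<l. F i \<subseteq> X \<and> large a (F i)) \<and>
     (\<forall>i<l. \<forall>j<l. i < j \<longrightarrow> Max (F i) < Min (F j)) \<and>
     large b ((\<lambda>i. Max (F i)) ` {..<l}) \<and>
     (\<forall>i<l. \<forall>j<l. i < j \<longrightarrow> (\<forall>x\<in>F i. \<forall>x'\<in>F i. \<forall>y\<in>F j. \<forall>y'\<in>F j.
         P x y = P x' y'))"

definition admits_grouping :: "ord_cnf \<Rightarrow> ord_cnf \<Rightarrow> nat \<Rightarrow> nat set \<Rightarrow> bool" where
  "admits_grouping a b k X \<longleftrightarrow>
     (\<forall>P. (\<forall>x\<in>X. \<forall>y\<in>X. x < y \<longrightarrow> P x y < k) \<longrightarrow> (\<exists>F l. grouping a b P X F l))"

end

theory Submission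
  imports Defs "HOL-Library.Multiset" "HOL-Library.FuncSet"
begin

text \<open>Let \<open>k = Min X\<close>. Since \<open>X\<close> is \<open>\<omega>^(n+3)\<close>-large, \<open>X\<close> without its minimum is
  \<open>\<omega>^(n+2)\<cdot>k\<close>-large and therefore splits into \<open>c \<le> k\<close> consecutive \<open>\<omega>^(n+2)\<close>-large blocks
  \<open>E j\<close>. An \<open>\<omega>^3\<close>-large interval \<open>[v, u)\<close> has \<open>u > 2^2^(v+1) \<ge> v^v\<close>, so sparseness gives
  \<open>x^x < y\<close> for \<open>x < y\<close> in \<open>X\<close>, and every colouring met below uses fewer colours than the
  points it colours. This is what the pigeonhole principle for largeness needs: a set that is
  \<open>\<omega>^(e+1)\<close>-large and coloured with at most \<open>min\<close> many colours has an \<open>\<omega>^e\<close>-large colour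
  class. Applied in \<open>E j\<close> to the colouring \<open>y \<mapsto> (P x y)\<close>, \<open>x \<in> X\<close> below \<open>E j\<close>, it gives an
  \<open>\<omega>^(n+1)\<close>-large \<open>G j \<subseteq> E j\<close> on which \<open>P x\<close> is constant for all such \<open>x\<close>; applied in \<open>G i\<close> to
  \<open>x \<mapsto> (P x (Min (G j)))\<close>, \<open>i < j < c\<close>, it gives an \<open>\<omega>^n\<close>-large \<open>F i \<subseteq> G i\<close>, and the \<open>F i\<close> form
  the grouping. The pigeonhole principle is proved for natural sums of ordinals, by induction
  on the set, with ordinals represented by the multisets of their Cantor normal form exponents.\<close>

subsection \<open>Largeness for multisets of exponents\<close>

text \<open>The ordinal \<open>\<omega>^e\<^sub>1 + \<dots> + \<omega>^e\<^sub>k\<close> is represented by the multiset of its exponents,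
  on which fundamental sequences act through the least exponent.\<close>

definition mfund :: "nat multiset \<Rightarrow> nat \<Rightarrow> nat multiset" where
  "mfund M z = (if M = {#} then {#} else
     (M - {#Min_mset M#}) + (if Min_mset M = 0 then {#} else replicate_mset z (Min_mset M - 1)))"

text \<open>\<open>large_in M W\<close> says that \<open>W\<close> has an \<open>M\<close>-large subset (\<open>large_in_iff\<close>), built from its
  least element \<open>z\<close> upwards.\<close>

inductive large_in :: "nat multiset \<Rightarrow> nat set \<Rightarrow> bool" where
  empty: "large_in {#} W"
| step: "z \<in> W \<Longrightarrow> large_in (mfund M z) {w\<in>W. z < w} \<Longrightarrow> large_in M W"

lemma large_in_mono: "large_in M W \<Longrightarrow> W \<subseteq> W' \<Longrightarrow> large_in M W'"
proof (induction arbitrary: W' rule: large_in.induct)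
  case (empty W)
  show ?case by (rule large_in.empty)
next
  case (step z W M)
  have "large_in (mfund M z) {w\<in>W'. z < w}"
    using step.prems by (intro step.IH) auto
  with step show ?case by (blast intro: large_in.step)
qed

lemma large_in_first:
  "large_in M W \<Longrightarrow> M \<noteq> {#} \<Longrightarrow> \<exists>z\<in>W. large_in (mfund M z) {w\<in>W. z < w}"
  by (auto elim: large_in.cases)

lemma large_in_nonempty: "large_in M W \<Longrightarrow> M \<noteq> {#} \<Longrightarrow> W \<noteq> {}"
  using large_in_first by blast

lemma mfund_nonempty:
  "M \<noteq> {#} \<Longrightarrow> mfund M z =
     (M - {#Min_mset M#}) + (if Min_mset M = 0 then {#} else replicate_mset z (Min_mset M - 1))"
  unfolding mfund_def by simp

lemma mfund_single_Suc [simp]: "mfund {#Suc e#} z = replicate_mset z e"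
  unfolding mfund_def by simp

lemma mfund_replicate_0 [simp]: "mfund (replicate_mset (Suc k) 0) z = replicate_mset k 0"
  unfolding mfund_def by (simp add: Min_eqI)

lemma mfund_add_above:
  assumes "B \<noteq> {#}" "\<forall>a\<in>#A. Min_mset B \<le> a"
  shows "mfund (A + B) z = A + mfund B z"
proof -
  let ?m = "Min_mset B"
  let ?R = "if ?m = 0 then {#} else replicate_mset z (?m - 1)"
  have mB: "?m \<in># B" using assms(1) by simp
  have min: "Min_mset (A + B) = ?m"
    using assms mB by (intro Min_eqI) auto
  have "A + B \<noteq> {#}" using assms(1) by simp
  from mfund_nonempty[OF this, of z] have "mfund (A + B) z = (A + B - {#?m#}) + ?R"
    unfolding min .
  also have "A + B - {#?m#} = A + (B - {#?m#})"
    using mB by (intro multiset_diff_union_assoc) simp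
  also have "A + (B - {#?m#}) + ?R = A + mfund B z"
    unfolding mfund_nonempty[OF assms(1)] by (simp only: add.assoc)
  finally show ?thesis .
qed

lemma mfund_elem_bound:
  assumes "b \<in># mfund B z" shows "\<exists>b'\<in>#B. b \<le> b'"
proof -
  have B: "B \<noteq> {#}" using assms unfolding mfund_def by (auto split: if_splits)
  let ?m = "Min_mset B"
  have "b \<in># B - {#?m#} \<or> b \<in># (if ?m = 0 then {#} else replicate_mset z (?m - 1))"
    using assms mfund_nonempty[OF B, of z] by (metis union_iff)
  then have "b \<in># B - {#?m#} \<or> b \<le> ?m"
    by (auto split: if_splits)
  then show ?thesis
    using B by (meson Min_in_mset in_diffD order_refl)
qed

lemma cnf_ok_snoc: "cnf_ok (\<beta> @ [l]) \<longleftrightarrow> cnf_ok \<beta> \<and> (\<forall>y\<in>set \<beta>. l \<le> y)"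
  unfolding cnf_ok_def by (simp add: sorted_wrt_append)

lemma cnf_ok_Min_mset: "cnf_ok (\<beta> @ [l]) \<Longrightarrow> Min_mset (mset (\<beta> @ [l])) = l"
  unfolding cnf_ok_snoc by (intro Min_eqI) auto

lemma mset_fund:
  assumes "cnf_ok \<alpha>" shows "mset (fund \<alpha> z) = mfund (mset \<alpha>) z"
proof (cases \<alpha> rule: rev_cases)
  case Nil
  then show ?thesis unfolding fund_def mfund_def by simp
next
  case (snoc \<beta> l)
  then have "Min_mset (mset \<alpha>) = l" using cnf_ok_Min_mset assms by blast
  moreover have "mset \<alpha> \<noteq> {#}" using snoc by simp
  ultimately show ?thesis
    using mfund_nonempty[of "mset \<alpha>" z] unfolding snoc fund_def by (cases l) auto
qed

lemma cnf_ok_fund: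
  assumes "cnf_ok \<alpha>" shows "cnf_ok (fund \<alpha> z)"
proof (cases \<alpha> rule: rev_cases)
  case Nil
  then show ?thesis unfolding fund_def cnf_ok_def by simp
next
  case (snoc \<beta> l)
  have "sorted_wrt (\<ge>) (replicate z n)" for n :: nat
    by (induction z) auto
  then show ?thesis
    using assms unfolding snoc fund_def cnf_ok_snoc
    by (cases l) (auto simp: cnf_ok_def sorted_wrt_append)
qed

lemma large_in_of_foldl_fund:
  "cnf_ok \<alpha> \<Longrightarrow> foldl fund \<alpha> xs = [] \<Longrightarrow> sorted_wrt (<) xs \<Longrightarrow> large_in (mset \<alpha>) (set xs)"
proof (induction xs arbitrary: \<alpha>)
  case Nil
  then show ?case by (simp add: large_in.empty)
next
  case (Cons x xs)
  show ?case
  proof (cases "\<alpha> = []")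
    case True
    then show ?thesis by (simp add: large_in.empty)
  next
    case False
    have "large_in (mset (fund \<alpha> x)) (set xs)"
      using Cons.IH[OF cnf_ok_fund[OF Cons.prems(1)]] Cons.prems(2,3) by simp
    moreover have "{w\<in>set (x # xs). x < w} = set xs" using Cons.prems(3) by auto
    ultimately have "large_in (mfund (mset \<alpha>) x) {w\<in>set (x # xs). x < w}"
      using mset_fund[OF Cons.prems(1)] by simp
    then show ?thesis by (rule large_in.step[rotated]) simp
  qed
qed

lemma large_of_large_in:
  "large_in M W \<Longrightarrow> M = mset \<alpha> \<Longrightarrow> cnf_ok \<alpha> \<Longrightarrow> \<exists>F\<subseteq>W. large \<alpha> F"
proof (induction arbitrary: \<alpha> rule: large_in.induct)
  case (empty W)
  then show ?case unfolding large_def by (intro exI[of _ "{}"]) simp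
next
  case (step z W M)
  show ?case
  proof (cases "\<alpha> = []")
    case True
    then show ?thesis unfolding large_def by (intro exI[of _ "{}"]) simp
  next
    case False
    have "mfund M z = mset (fund \<alpha> z)" using mset_fund[OF step.prems(2)] step.prems(1) by simp
    then obtain F where F: "F \<subseteq> {w\<in>W. z < w}" "large (fund \<alpha> z) F"
      using step.IH[OF _ cnf_ok_fund[OF step.prems(2)]] by blast
    have "finite F" using F(2) unfolding large_def by simp
    have "Min (insert z F) = z" using F(1) \<open>finite F\<close> by (intro Min_eqI) auto
    moreover have "insert z F - {z} = F" using F(1) by auto
    ultimately have "sorted_list_of_set (insert z F) = z # sorted_list_of_set F"
      using sorted_list_of_set_nonempty[of "insert z F"] \<open>finite F\<close> by simp
    then have "large \<alpha> (insert z F)" using F(2) \<open>finite F\<close> unfolding large_def by simp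
    moreover have "insert z F \<subseteq> W" using F(1) step.hyps(1) by auto
    ultimately show ?thesis by blast
  qed
qed

lemma large_in_iff: "cnf_ok \<alpha> \<Longrightarrow> large_in (mset \<alpha>) W \<longleftrightarrow> (\<exists>F\<subseteq>W. large \<alpha> F)"
proof
  assume "cnf_ok \<alpha>" "\<exists>F\<subseteq>W. large \<alpha> F"
  then obtain F where F: "F \<subseteq> W" "finite F" "foldl fund \<alpha> (sorted_list_of_set F) = []"
    unfolding large_def by blast
  have "large_in (mset \<alpha>) (set (sorted_list_of_set F))"
    using large_in_of_foldl_fund[OF \<open>cnf_ok \<alpha>\<close> F(3)] by simp
  then show "large_in (mset \<alpha>) W"
    using F(1,2) by (simp add: large_in_mono)
qed (rule large_of_large_in, simp_all)

corollary large_in_om_pow_iff: "large_in {#e#} W \<longleftrightarrow> (\<exists>F\<subseteq>W. large (om_pow e) F)"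
  using large_in_iff[of "om_pow e"] unfolding om_pow_def cnf_ok_def by simp

lemma large_nonempty: "large \<alpha> F \<Longrightarrow> \<alpha> \<noteq> [] \<Longrightarrow> F \<noteq> {}"
  unfolding large_def by auto

lemma foldl_fund_replicate_0: "foldl fund (replicate k 0) xs = replicate (k - length xs) 0"
proof (induction xs arbitrary: k)
  case Nil
  then show ?case by simp
next
  case (Cons x xs)
  have "fund (replicate k 0) x = replicate (k - 1) 0"
  proof (cases k)
    case 0
    then show ?thesis unfolding fund_def by simp
  next
    case (Suc k')
    have "replicate (Suc k') (0::nat) = replicate k' 0 @ [0]" by (simp add: replicate_append_same)
    then show ?thesis unfolding fund_def Suc by simp
  qed
  then show ?case using Cons.IH[of "k - 1"] by simp
qed

lemma large_ord_nat_iff: "large (ord_nat c) F \<longleftrightarrow> finite F \<and> c \<le> card F"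
  unfolding large_def ord_nat_def foldl_fund_replicate_0 by auto

subsection \<open>Domination\<close>

definition count_ge :: "nat \<Rightarrow> nat multiset \<Rightarrow> nat" where
  "count_ge t M = size (filter_mset (\<lambda>x. t \<le> x) M)"

text \<open>Domination of exponent multisets is stronger than the ordinal order.\<close>

definition dominated :: "nat multiset \<Rightarrow> nat multiset \<Rightarrow> bool" where
  "dominated N M \<longleftrightarrow> (\<forall>t. count_ge t N \<le> count_ge t M)"

lemma count_ge_empty [simp]: "count_ge t {#} = 0"
  unfolding count_ge_def by simp

lemma count_ge_add_mset [simp]: "count_ge t (add_mset a B) = (if t \<le> a then 1 else 0) + count_ge t B"
  unfolding count_ge_def by simp

lemma count_ge_union [simp]: "count_ge t (A + B) = count_ge t A + count_ge t B"
  unfolding count_ge_def by simp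

lemma count_ge_replicate [simp]: "count_ge t (replicate_mset z d) = (if t \<le> d then z else 0)"
  by (induction z) auto

lemma count_ge_le_size: "count_ge t M \<le> size M"
  unfolding count_ge_def by (rule size_filter_mset_lesseq)

lemma count_ge_le_Min:
  assumes "t \<le> Min_mset M" shows "count_ge t M = size M"
proof -
  have "filter_mset (\<lambda>x. t \<le> x) M = M"
    by (intro filter_mset_eq_conv[THEN iffD2]) (auto intro: order_trans[OF assms] Min_le)
  then show ?thesis unfolding count_ge_def by simp
qed

lemma count_ge_less_size:
  assumes "m \<in># M" "m < t" shows "count_ge t M < size M"
proof -
  obtain M0 where "M = add_mset m M0" using assms(1) by (metis multi_member_split)
  then show ?thesis using assms(2) count_ge_le_size[of t M0] by simp
qed

lemma count_ge_mfund:
  assumes "M \<noteq> {#}"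
  shows "count_ge t (mfund M z) + (if t \<le> Min_mset M then 1 else 0)
     = count_ge t M + (if Min_mset M \<noteq> 0 \<and> t < Min_mset M then z else 0)"
proof -
  let ?m = "Min_mset M"
  have "M = add_mset ?m (M - {#?m#})" using assms by simp
  then have "count_ge t M = (if t \<le> ?m then 1 else 0) + count_ge t (M - {#?m#})"
    by (metis count_ge_add_mset)
  then show ?thesis using mfund_nonempty[OF assms, of z] by auto
qed

lemma dominated_size: "dominated N M \<Longrightarrow> size N \<le> size M"
  unfolding dominated_def using count_ge_le_Min[of 0 N] count_ge_le_size[of 0 M] by (metis le0 le_trans)

lemma dominated_mfund_right:
  assumes D: "dominated N M" and N: "N \<noteq> {#}" and less: "Min_mset M < Min_mset N"
  shows "dominated N (mfund M z)"
  unfolding dominated_def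
proof
  fix t
  let ?m = "Min_mset M"
  have M: "M \<noteq> {#}" using dominated_size[OF D] N by auto
  have FM: "count_ge t (mfund M z) + (if t \<le> ?m then 1 else 0)
     = count_ge t M + (if ?m \<noteq> 0 \<and> t < ?m then z else 0)" using count_ge_mfund[OF M] .
  show "count_ge t N \<le> count_ge t (mfund M z)"
  proof (cases "?m < t")
    case True
    then show ?thesis using FM D unfolding dominated_def by simp
  next
    case False
    have "count_ge t N = count_ge (Suc ?m) N" using count_ge_le_Min less False by simp
    also have "\<dots> \<le> count_ge (Suc ?m) M" using D unfolding dominated_def by blast
    also have "\<dots> < size M" using count_ge_less_size[OF Min_in_mset[OF M]] by simp
    also have "size M \<le> count_ge t (mfund M z) + 1" using FM count_ge_le_Min[of t M] False by simp
    finally show ?thesis by simp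
  qed
qed

lemma dominated_mfund_both:
  assumes D: "dominated N M" and N: "N \<noteq> {#}" and le: "Min_mset N \<le> Min_mset M"
  shows "dominated (mfund N z) (mfund M z)"
  unfolding dominated_def
proof
  fix t
  let ?m = "Min_mset M" and ?n = "Min_mset N"
  have size: "size N \<le> size M" using dominated_size[OF D] .
  then have M: "M \<noteq> {#}" using N by auto
  have FM: "count_ge t (mfund M z) + (if t \<le> ?m then 1 else 0)
     = count_ge t M + (if ?m \<noteq> 0 \<and> t < ?m then z else 0)" using count_ge_mfund[OF M] .
  have FN: "count_ge t (mfund N z) + (if t \<le> ?n then 1 else 0)
     = count_ge t N + (if ?n \<noteq> 0 \<and> t < ?n then z else 0)" using count_ge_mfund[OF N] .
  consider "?m < t" | "t \<le> ?n" | "?n < t" "t \<le> ?m" by linarith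
  then show "count_ge t (mfund N z) \<le> count_ge t (mfund M z)"
  proof cases
    case 1
    then show ?thesis using FM FN le D unfolding dominated_def by simp
  next
    case 2
    have "count_ge t (mfund N z) + 1 = size N + (if ?n \<noteq> 0 \<and> t < ?n then z else 0)"
      using FN count_ge_le_Min[of t N] 2 by simp
    moreover have "count_ge t (mfund M z) + 1 = size M + (if ?m \<noteq> 0 \<and> t < ?m then z else 0)"
      using FM count_ge_le_Min[of t M] 2 le by simp
    moreover have "(if ?n \<noteq> 0 \<and> t < ?n then z else 0) \<le> (if ?m \<noteq> 0 \<and> t < ?m then z else 0)"
      using 2 le by simp
    ultimately show ?thesis using size by linarith
  next
    case 3
    have "count_ge t (mfund N z) = count_ge t N" using FN 3 by simp
    also have "\<dots> < size N" using count_ge_less_size[OF Min_in_mset[OF N]] 3 by simp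
    also have "size N \<le> count_ge t (mfund M z) + 1"
      using FM count_ge_le_Min[of t M] 3 size by simp
    finally show ?thesis by simp
  qed
qed

lemma large_in_dominated: "large_in M W \<Longrightarrow> dominated N M \<Longrightarrow> large_in N W"
proof (induction arbitrary: N rule: large_in.induct)
  case (empty W)
  then have "size N = 0" using dominated_size by fastforce
  then show ?case by (simp add: large_in.empty)
next
  case (step z W M)
  show ?case
  proof (cases "N = {#}")
    case True
    then show ?thesis by (simp add: large_in.empty)
  next
    case N: False
    show ?thesis
    proof (cases "Min_mset M < Min_mset N")
      case True
      then have "large_in N {w\<in>W. z < w}"
        using step.IH dominated_mfund_right[OF step.prems N] by blast
      then show ?thesis by (rule large_in_mono) auto
    next
      case False
      then have "large_in (mfund N z) {w\<in>W. z < w}"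
        using step.IH dominated_mfund_both[OF step.prems N] by simp
      with step.hyps(1) show ?thesis by (rule large_in.step)
    qed
  qed
qed

lemma dominated_replicate: "k \<le> l \<Longrightarrow> dominated (replicate_mset k e) (replicate_mset l e)"
  unfolding dominated_def by simp

subsection \<open>Splitting into blocks\<close>

lemma large_in_split:
  "large_in M W \<Longrightarrow> M = A + B \<Longrightarrow> B \<noteq> {#} \<Longrightarrow> \<forall>a\<in>#A. \<forall>b\<in>#B. b \<le> a
    \<Longrightarrow> \<exists>t. large_in B {w\<in>W. w \<le> t} \<and> large_in A {w\<in>W. t < w}"
proof (induction arbitrary: A B rule: large_in.induct)
  case (empty W)
  then show ?case by simp
next
  case (step z W M)
  have "Min_mset B \<in># B" using step.prems(2) by simp
  then have "\<forall>a\<in>#A. Min_mset B \<le> a" using step.prems(3) by blast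
  then have F: "mfund M z = A + mfund B z"
    using mfund_add_above[OF step.prems(2)] step.prems(1) by simp
  show ?case
  proof (cases "mfund B z = {#}")
    case True
    have "large_in B {w\<in>W. w \<le> z}"
    proof (rule large_in.step[of z])
      show "z \<in> {w\<in>W. w \<le> z}" using step.hyps(1) by simp
      show "large_in (mfund B z) {w \<in> {w\<in>W. w \<le> z}. z < w}" using True by (simp add: large_in.empty)
    qed
    moreover have "large_in A {w\<in>W. z < w}" using step.hyps(2) F True by simp
    ultimately show ?thesis by blast
  next
    case False
    have "\<forall>a\<in>#A. \<forall>b\<in>#mfund B z. b \<le> a"
      using mfund_elem_bound step.prems(3) by (meson le_trans)
    then obtain t where t1: "large_in (mfund B z) {w\<in>{w\<in>W. z < w}. w \<le> t}"
      and t2: "large_in A {w\<in>{w\<in>W. z < w}. t < w}"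
      using step.IH[OF F False] by blast
    have "z < t" using large_in_nonempty[OF t1 False] by auto
    have "large_in B {w\<in>W. w \<le> t}"
    proof (rule large_in.step[of z])
      show "z \<in> {w\<in>W. w \<le> t}" using step.hyps(1) \<open>z < t\<close> by simp
      have "{w \<in> {w\<in>W. w \<le> t}. z < w} = {w\<in>{w\<in>W. z < w}. w \<le> t}" by auto
      then show "large_in (mfund B z) {w \<in> {w\<in>W. w \<le> t}. z < w}" using t1 by simp
    qed
    moreover have "{w\<in>{w\<in>W. z < w}. t < w} = {w\<in>W. t < w}" using \<open>z < t\<close> by auto
    ultimately show ?thesis using t2 by auto
  qed
qed

definition increasing_blocks :: "nat \<Rightarrow> (nat \<Rightarrow> nat set) \<Rightarrow> bool" where
  "increasing_blocks c E \<longleftrightarrow> (\<forall>i j. i < j \<longrightarrow> j < c \<longrightarrow> (\<forall>x\<in>E i. \<forall>y\<in>E j. x < y))"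

lemma increasing_blocks_subset:
  "increasing_blocks c E \<Longrightarrow> (\<And>i. i < c \<Longrightarrow> F i \<subseteq> E i) \<Longrightarrow> increasing_blocks c F"
  unfolding increasing_blocks_def by (metis in_mono less_trans)

lemma large_in_Suc_above_Min:
  assumes "finite W" "large_in {#Suc e#} W" "c \<le> Min W"
  shows "large_in (replicate_mset c e) {w\<in>W. Min W < w}"
proof -
  obtain z where z: "z \<in> W" "large_in (replicate_mset z e) {w\<in>W. z < w}"
    using large_in_first[OF assms(2)] by auto
  have "c \<le> z" using assms(1,3) z(1) by (meson Min_le le_trans)
  then have "large_in (replicate_mset c e) {w\<in>W. z < w}"
    using large_in_dominated[OF z(2) dominated_replicate] by blast
  moreover have "{w\<in>W. z < w} \<subseteq> {w\<in>W. Min W < w}" using Min_le[OF assms(1) z(1)] by auto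
  ultimately show ?thesis by (rule large_in_mono)
qed

lemma large_in_blocks:
  "large_in (replicate_mset c e) W \<Longrightarrow>
    \<exists>E. (\<forall>j<c. E j \<subseteq> W \<and> large_in {#e#} (E j)) \<and> increasing_blocks c E"
proof (induction c arbitrary: W)
  case 0
  then show ?case unfolding increasing_blocks_def by auto
next
  case (Suc c)
  have split: "replicate_mset (Suc c) e = replicate_mset c e + {#e#}" by simp
  have le: "\<forall>a\<in>#replicate_mset c e. \<forall>b\<in>#{#e#}. b \<le> a" by simp
  obtain t where t1: "large_in {#e#} {w\<in>W. w \<le> t}"
    and t2: "large_in (replicate_mset c e) {w\<in>W. t < w}"
    using large_in_split[OF Suc.prems split _ le] by auto
  obtain E where E: "\<forall>j<c. E j \<subseteq> {w\<in>W. t < w} \<and> large_in {#e#} (E j)" "increasing_blocks c E"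
    using Suc.IH[OF t2] by blast
  define E' where "E' j = (if j = 0 then {w\<in>W. w \<le> t} else E (j - 1))" for j
  have "\<forall>j<Suc c. E' j \<subseteq> W \<and> large_in {#e#} (E' j)"
    using E(1) t1 unfolding E'_def by (auto simp: less_Suc_eq_0_disj subset_iff)
  moreover have "increasing_blocks (Suc c) E'"
    unfolding increasing_blocks_def
  proof (intro allI impI ballI)
    fix i j x y assume ij: "i < j" "j < Suc c" and xy: "x \<in> E' i" "y \<in> E' j"
    then have "j - 1 < c" "j \<noteq> 0" by auto
    then have "E' j \<subseteq> {w\<in>W. t < w}" using E(1) unfolding E'_def by auto
    then have "t < y" using xy(2) by auto
    show "x < y"
    proof (cases "i = 0")
      case True
      then show ?thesis using xy(1) \<open>t < y\<close> unfolding E'_def by simp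
    next
      case False
      then show ?thesis
        using E(2)[unfolded increasing_blocks_def, rule_format, of "i - 1" "j - 1" x y] ij xy
        unfolding E'_def by auto
    qed
  qed
  ultimately show ?case by blast
qed

subsection \<open>Pigeonhole principle\<close>

lemma large_in_expand_Suc:
  "large_in M W \<Longrightarrow> M = R + {#Suc D#} \<Longrightarrow> \<forall>w\<in>W. y < w
    \<Longrightarrow> large_in (R + replicate_mset (Suc y) D) W"
proof (induction arbitrary: R rule: large_in.induct)
  case (empty W)
  then show ?case by simp
next
  case (step z W M)
  have "y < z" using step.prems(2) step.hyps(1) by blast
  show ?case
  proof (cases "\<forall>r\<in>#R. Suc D \<le> r")
    case True
    then have "mfund M z = R + replicate_mset z D"
      using mfund_add_above[of "{#Suc D#}" R z] step.prems(1) by simp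
    then have "large_in (R + replicate_mset z D) {w\<in>W. z < w}" using step.hyps(2) by simp
    moreover have "dominated (R + replicate_mset (Suc y) D) (R + replicate_mset z D)"
      unfolding dominated_def using \<open>y < z\<close> by auto
    ultimately have "large_in (R + replicate_mset (Suc y) D) {w\<in>W. z < w}"
      by (rule large_in_dominated)
    then show ?thesis by (rule large_in_mono) auto
  next
    case False
    then obtain r where "r \<in># R" "r \<le> D" by (auto simp: not_less_eq_eq)
    then have R: "R \<noteq> {#}" and "Min_mset R \<le> D" by (auto intro: order_trans[OF Min_le])
    have "mfund ({#Suc D#} + R) z = {#Suc D#} + mfund R z"
      using mfund_add_above[OF R, of "{#Suc D#}" z] \<open>Min_mset R \<le> D\<close> by simp
    then have "mfund M z = mfund R z + {#Suc D#}" using step.prems(1) by (simp add: add.commute)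
    then have "large_in (mfund R z + replicate_mset (Suc y) D) {w\<in>W. z < w}"
      using step.IH step.prems(2) by simp
    moreover have "mfund (replicate_mset (Suc y) D + R) z = replicate_mset (Suc y) D + mfund R z"
      using mfund_add_above[OF R, of "replicate_mset (Suc y) D" z] \<open>Min_mset R \<le> D\<close> by simp
    ultimately have "large_in (mfund (R + replicate_mset (Suc y) D) z) {w\<in>W. z < w}"
      by (simp add: add.commute)
    with step.hyps(1) show ?thesis by (rule large_in.step)
  qed
qed

lemma large_in_mfund_summand:
  assumes B: "B \<noteq> {#}" and L: "large_in (mfund (A + B) z) W" and above: "\<forall>w\<in>W. z < w"
  shows "large_in (A + mfund B z) W"
proof (cases "\<forall>a\<in>#A. Min_mset B \<le> a")
  case True
  then show ?thesis using L mfund_add_above[OF B True] by simp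
next
  case False
  then obtain a where a: "a \<in># A" "a < Min_mset B" by (auto simp: not_le)
  then have A: "A \<noteq> {#}" by auto
  define e where "e = Min_mset A"
  have "e \<le> a" using a(1) unfolding e_def by simp
  then have "e < Min_mset B" using a(2) by simp
  then obtain D where D: "Min_mset B = Suc D" and "e \<le> D" by (cases "Min_mset B") auto
  have "\<forall>b\<in>#B. e \<le> b" using \<open>e < Min_mset B\<close> by (meson Min_le finite_set_mset le_trans less_imp_le)
  from mfund_add_above[OF A this[unfolded e_def]] have "mfund (B + A) z = B + mfund A z" .
  then have L2: "large_in (mfund A z + B) W" using L by (simp add: add.commute)
  define B0 where "B0 = B - {#Suc D#}"
  have "B = B0 + {#Suc D#}" unfolding B0_def using Min_in_mset[OF B] D by simp
  then have "mfund A z + B = (mfund A z + B0) + {#Suc D#}" by (simp only: add.assoc)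
  from large_in_expand_Suc[OF L2 this above]
  have L3: "large_in ((mfund A z + B0) + replicate_mset (Suc z) D) W" .
  have fB: "mfund B z = B0 + replicate_mset z D"
    using mfund_nonempty[OF B, of z] D unfolding B0_def by simp
  define A0 where "A0 = A - {#e#}"
  have A0: "A = add_mset e A0" unfolding A0_def e_def using Min_in_mset[OF A] by simp
  have fA: "mfund A z = A0 + (if e = 0 then {#} else replicate_mset z (e - 1))"
    unfolding A0_def e_def using mfund_nonempty[OF A] .
  have "dominated (A + mfund B z) ((mfund A z + B0) + replicate_mset (Suc z) D)"
    unfolding dominated_def
  proof
    fix t
    have "count_ge t (A + mfund B z)
        = (if t \<le> e then 1 else 0) + count_ge t A0 + count_ge t B0 + (if t \<le> D then z else 0)"
      unfolding A0 fB by simp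
    moreover have "count_ge t A0 + count_ge t B0 + (if t \<le> D then Suc z else 0)
        \<le> count_ge t ((mfund A z + B0) + replicate_mset (Suc z) D)"
      unfolding fA by simp
    moreover have "(if t \<le> e then 1 else 0) + (if t \<le> D then z else 0) \<le> (if t \<le> D then Suc z else (0::nat))"
      using \<open>e \<le> D\<close> by simp
    ultimately show "count_ge t (A + mfund B z) \<le> count_ge t ((mfund A z + B0) + replicate_mset (Suc z) D)"
      by linarith
  qed
  with L3 show ?thesis by (rule large_in_dominated)
qed

lemma large_in_sum_update:
  fixes \<alpha> :: "'c \<Rightarrow> nat multiset"
  assumes "finite C" "i \<in> C" "\<alpha> i \<noteq> {#}"
    and L: "large_in (mfund (\<Sum>j\<in>C. \<alpha> j) z) W" and above: "\<forall>w\<in>W. z < w"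
  shows "large_in (\<Sum>j\<in>C. (\<alpha>(i := mfund (\<alpha> i) z)) j) W"
proof -
  let ?A = "\<Sum>j\<in>C - {i}. \<alpha> j"
  have "(\<Sum>j\<in>C. \<alpha> j) = ?A + \<alpha> i"
    using sum.remove[OF assms(1,2), of \<alpha>] by (simp add: add.commute)
  then have "large_in (?A + mfund (\<alpha> i) z) W"
    using large_in_mfund_summand[OF assms(3) _ above] L by simp
  moreover have "(\<Sum>j\<in>C. (\<alpha>(i := mfund (\<alpha> i) z)) j) = ?A + mfund (\<alpha> i) z"
    using sum.remove[OF assms(1,2), of "\<alpha>(i := mfund (\<alpha> i) z)"] by (simp add: add.commute)
  ultimately show ?thesis by simp
qed

text \<open>The natural sum of ordinals is the sum of their exponent multisets.\<close>

lemma large_in_sum_colouring: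
  fixes \<alpha> :: "'c \<Rightarrow> nat multiset"
  assumes "finite W" "large_in (\<Sum>i\<in>C. \<alpha> i) W" "finite C" "C \<noteq> {}" "g ` W \<subseteq> C"
  shows "\<exists>i\<in>C. large_in (\<alpha> i) {w\<in>W. g w = i}"
  using assms
proof (induction "card W" arbitrary: W \<alpha> rule: less_induct)
  case less
  show ?case
  proof (cases "\<exists>i\<in>C. \<alpha> i = {#}")
    case True
    then show ?thesis by (metis large_in.empty)
  next
    case False
    obtain i0 where "i0 \<in> C" using less.prems(4) by blast
    then have "(\<Sum>i\<in>C. \<alpha> i) \<noteq> {#}" using False sum.remove[OF less.prems(3), of i0 \<alpha>] by auto
    then obtain z where z: "z \<in> W" and Lz: "large_in (mfund (\<Sum>i\<in>C. \<alpha> i) z) {w\<in>W. z < w}"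
      using large_in_first[OF less.prems(2)] by blast
    let ?i = "g z"
    have i: "?i \<in> C" using less.prems(5) z by blast
    have nonempty: "\<alpha> ?i \<noteq> {#}" using False i by blast
    define \<alpha>' where "\<alpha>' = \<alpha>(?i := mfund (\<alpha> ?i) z)"
    have L': "large_in (\<Sum>j\<in>C. \<alpha>' j) {w\<in>W. z < w}"
      unfolding \<alpha>'_def using large_in_sum_update[OF less.prems(3) i nonempty Lz] by simp
    have "card {w\<in>W. z < w} < card W"
      using z less.prems(1) by (intro psubset_card_mono) auto
    from less.hyps[OF this _ L' less.prems(3,4)]
    obtain j where j: "j \<in> C" "large_in (\<alpha>' j) {w\<in>{w\<in>W. z < w}. g w = j}"
      using less.prems(1,5) by auto
    show ?thesis
    proof (cases "j = ?i")
      case True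
      have "{w\<in>{w\<in>W. g w = ?i}. z < w} = {w\<in>{w\<in>W. z < w}. g w = ?i}" by auto
      then have "large_in (mfund (\<alpha> ?i) z) {w\<in>{w\<in>W. g w = ?i}. z < w}"
        using j(2) True unfolding \<alpha>'_def by simp
      moreover have "z \<in> {w\<in>W. g w = ?i}" using z by simp
      ultimately have "large_in (\<alpha> ?i) {w\<in>W. g w = ?i}" by (rule large_in.step[rotated])
      then show ?thesis using i by blast
    next
      case False
      then have "large_in (\<alpha> j) {w\<in>{w\<in>W. z < w}. g w = j}"
        using j(2) unfolding \<alpha>'_def by simp
      then have "large_in (\<alpha> j) {w\<in>W. g w = j}"
        by (rule large_in_mono) auto
      then show ?thesis using j(1) by blast
    qed
  qed
qed

lemma large_in_pigeonhole:
  assumes "finite Y" "large_in {#Suc m#} Y" "finite C" "g ` Y \<subseteq> C" "\<forall>y\<in>Y. card C \<le> y"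
  shows "\<exists>i\<in>C. large_in {#m#} {y\<in>Y. g y = i}"
proof -
  obtain z where z: "z \<in> Y" "large_in (replicate_mset z m) {y\<in>Y. z < y}"
    using large_in_first[OF assms(2)] by auto
  have "C \<noteq> {}" using z(1) assms(4) by blast
  have "(\<Sum>i\<in>C. {#m#}) = replicate_mset (card C) m"
    using assms(3) by (induction rule: finite_induct) auto
  moreover have "card C \<le> z" using assms(5) z(1) by blast
  ultimately have L: "large_in (\<Sum>i\<in>C. {#m#}) {y\<in>Y. z < y}"
    using large_in_dominated[OF z(2) dominated_replicate] by simp
  have img: "g ` {y\<in>Y. z < y} \<subseteq> C" using assms(4) by auto
  obtain i where "i \<in> C" "large_in {#m#} {y\<in>{y\<in>Y. z < y}. g y = i}"
    using large_in_sum_colouring[OF _ L assms(3) \<open>C \<noteq> {}\<close> img] assms(1) by auto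
  moreover have "{y\<in>{y\<in>Y. z < y}. g y = i} \<subseteq> {y\<in>Y. g y = i}" by auto
  ultimately show ?thesis by (blast intro: large_in_mono)
qed

text \<open>The colour of \<open>y\<close> is the tuple of the values \<open>f s y\<close>, \<open>s \<in> S\<close>.\<close>

lemma large_in_pigeonhole_tuple:
  assumes "finite Y" "large_in {#Suc m#} Y" "finite S"
    and "\<forall>s\<in>S. \<forall>y\<in>Y. f s y < k" "\<forall>y\<in>Y. k ^ card S \<le> y"
  shows "\<exists>H\<subseteq>Y. large_in {#m#} H \<and> (\<forall>s\<in>S. \<forall>y\<in>H. \<forall>y'\<in>H. f s y = f s y')"
proof -
  let ?C = "PiE S (\<lambda>_. {..<k})"
  have "card ?C = k ^ card S" using assms(3) by (simp add: card_PiE)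
  moreover have "(\<lambda>y. restrict (\<lambda>s. f s y) S) ` Y \<subseteq> ?C" using assms(4) by auto
  ultimately obtain i where i: "large_in {#m#} {y\<in>Y. restrict (\<lambda>s. f s y) S = i}"
    using large_in_pigeonhole[OF assms(1,2)] assms(3,5) by (metis finite_PiE finite_lessThan)
  have "f s y = f s y'" if "s \<in> S" "restrict (\<lambda>s. f s y) S = restrict (\<lambda>s. f s y') S" for s y y'
    using that by (metis restrict_apply')
  with i show ?thesis by (intro exI[of _ "{y\<in>Y. restrict (\<lambda>s. f s y) S = i}"]) auto
qed

subsection \<open>Growth of \<open>\<omega>\<^sup>3\<close>-large intervals\<close>

lemma large_in_replicate_0_card:
  "large_in M W \<Longrightarrow> M = replicate_mset k 0 \<Longrightarrow> finite W \<Longrightarrow> k \<le> card W"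
proof (induction arbitrary: k rule: large_in.induct)
  case (empty W)
  then show ?case by simp
next
  case (step z W M)
  show ?case
  proof (cases k)
    case 0
    then show ?thesis by simp
  next
    case (Suc k')
    then have "mfund M z = replicate_mset k' 0" using step.prems(1) mfund_replicate_0 by metis
    then have "k' \<le> card {w\<in>W. z < w}" using step.IH step.prems(2) by simp
    moreover have "card {w\<in>W. z < w} < card W"
      using step.hyps(1) step.prems(2) by (intro psubset_card_mono) auto
    ultimately show ?thesis using Suc by simp
  qed
qed

lemma omega_large_bound:
  assumes "large_in {#Suc 0#} W" "W \<subseteq> {a<..<u}" shows "2 * a + 2 < u"
proof -
  obtain z where z: "z \<in> W" "large_in (replicate_mset z 0) {w\<in>W. z < w}"
    using large_in_first[OF assms(1)] by auto
  have sub: "{w\<in>W. z < w} \<subseteq> {z<..<u}" using assms(2) by auto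
  then have "z \<le> card {w\<in>W. z < w}"
    using large_in_replicate_0_card[OF z(2) refl] finite_subset by blast
  also have "\<dots> \<le> card {z<..<u}" using sub by (intro card_mono) auto
  finally have "z \<le> u - Suc z" by simp
  moreover have "a < z" "z < u" using z(1) assms(2) by auto
  ultimately show ?thesis by linarith
qed

lemma omega_mult_large_bound:
  "1 \<le> k \<Longrightarrow> large_in (replicate_mset k (Suc 0)) W \<Longrightarrow> W \<subseteq> {a<..<u} \<Longrightarrow> 2 ^ k * (a + 1) < u"
proof (induction k arbitrary: a W)
  case 0
  then show ?case by simp
next
  case (Suc k)
  show ?case
  proof (cases "k = 0")
    case True
    then show ?thesis using omega_large_bound[of W a u] Suc.prems by simp
  next
    case False
    have split: "replicate_mset (Suc k) (Suc 0) = replicate_mset k (Suc 0) + {#Suc 0#}" by simp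
    have le: "\<forall>a\<in>#replicate_mset k (Suc 0). \<forall>b\<in>#{#Suc 0#}. b \<le> a" by simp
    obtain t where t1: "large_in {#Suc 0#} {w\<in>W. w \<le> t}"
      and t2: "large_in (replicate_mset k (Suc 0)) {w\<in>W. t < w}"
      using large_in_split[OF Suc.prems(2) split _ le] by auto
    have "2 * a + 2 < Suc t" using Suc.prems(3) by (intro omega_large_bound[OF t1]) auto
    moreover have "{w\<in>W. t < w} \<subseteq> {t<..<u}" using Suc.prems(3) by auto
    then have "2 ^ k * (t + 1) < u" using Suc.IH[OF _ t2] False by auto
    moreover have "2 ^ Suc k * (a + 1) = 2 ^ k * (2 * a + 2)" by simp
    moreover have "2 ^ k * (2 * a + 2) \<le> 2 ^ k * (t + 1)" using calculation(1) by (intro mult_le_mono2) simp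
    ultimately show ?thesis by linarith
  qed
qed

lemma omega2_large_bound:
  assumes "large_in {#Suc (Suc 0)#} W" "W \<subseteq> {a<..<u}" shows "2 ^ (a + 1) < u"
proof -
  obtain z where z: "z \<in> W" "large_in (replicate_mset z (Suc 0)) {w\<in>W. z < w}"
    using large_in_first[OF assms(1)] by auto
  have az: "a < z" "z < u" using z(1) assms(2) by auto
  have "{w\<in>W. z < w} \<subseteq> {z<..<u}" using assms(2) by auto
  then have "2 ^ z * (z + 1) < u" using omega_mult_large_bound[OF _ z(2)] az by auto
  moreover have "2 ^ (a + 1) \<le> (2::nat) ^ z" using az by (intro power_increasing) auto
  moreover have "(2::nat) ^ z \<le> 2 ^ z * (z + 1)" by simp
  ultimately show ?thesis by linarith
qed

lemma omega2_mult_large_bound: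
  assumes "2 \<le> k" "large_in (replicate_mset k (Suc (Suc 0))) W" "W \<subseteq> {a<..<u}"
  shows "2 ^ 2 ^ (a + 1) < u"
proof -
  obtain k' where k: "k = Suc k'" "1 \<le> k'" using assms(1) by (cases k) auto
  have split: "replicate_mset k (Suc (Suc 0)) = replicate_mset k' (Suc (Suc 0)) + {#Suc (Suc 0)#}"
    using k by simp
  have le: "\<forall>a\<in>#replicate_mset k' (Suc (Suc 0)). \<forall>b\<in>#{#Suc (Suc 0)#}. b \<le> a" by simp
  obtain t where t1: "large_in {#Suc (Suc 0)#} {w\<in>W. w \<le> t}"
    and t2: "large_in (replicate_mset k' (Suc (Suc 0))) {w\<in>W. t < w}"
    using large_in_split[OF assms(2) split _ le] by auto
  have "large_in {#Suc (Suc 0)#} {w\<in>W. t < w}"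
    using large_in_dominated[OF t2] dominated_replicate[of 1 k'] k by simp
  then have "2 ^ (t + 1) < u" using assms(3) by (intro omega2_large_bound) auto
  moreover have "2 ^ (a + 1) < Suc t" using assms(3) by (intro omega2_large_bound[OF t1]) auto
  then have "(2::nat) ^ 2 ^ (a + 1) \<le> 2 ^ (t + 1)" by (intro power_increasing) auto
  ultimately show ?thesis by linarith
qed

lemma square_le_pow2: "v * v \<le> (2::nat) ^ (v + 1)"
proof (induction v)
  case 0
  then show ?case by simp
next
  case (Suc v)
  show ?case
  proof (cases "v \<le> 2")
    case True
    then have "v = 0 \<or> v = 1 \<or> v = 2" by auto
    then show ?thesis by auto
  next
    case False
    have "3 * v \<le> v * v" using False by (intro mult_le_mono1) simp
    have "Suc v * Suc v = v * v + 2 * v + 1" by simp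
    also have "\<dots> \<le> v * v + v * v" using \<open>3 * v \<le> v * v\<close> False by linarith
    also have "\<dots> \<le> 2 ^ (v + 1) + 2 ^ (v + 1)" using Suc.IH by simp
    finally show ?thesis by simp
  qed
qed

lemma omega3_large_interval_bound:
  assumes "large_in {#3#} {v..<u}" "2 \<le> v" shows "v ^ v < u"
proof -
  obtain z where z: "z \<in> {v..<u}" "large_in (replicate_mset z (Suc (Suc 0))) {w\<in>{v..<u}. z < w}"
    using large_in_first[OF assms(1)] by (auto simp: numeral_3_eq_3)
  have "{w\<in>{v..<u}. z < w} \<subseteq> {z<..<u}" by auto
  then have "2 ^ 2 ^ (z + 1) < u" using omega2_mult_large_bound[OF _ z(2)] z(1) assms(2) by auto
  moreover have "v ^ v \<le> ((2::nat) ^ v) ^ v" by (intro power_mono) simp_all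
  moreover have "((2::nat) ^ v) ^ v = 2 ^ (v * v)" by (simp add: power_mult)
  moreover have "(2::nat) ^ (v * v) \<le> 2 ^ 2 ^ (v + 1)"
    using square_le_pow2 by (intro power_increasing) auto
  moreover have "(2::nat) ^ 2 ^ (v + 1) \<le> 2 ^ 2 ^ (z + 1)"
    using z(1) by (intro power_increasing) auto
  ultimately show ?thesis by linarith
qed

lemma sparse_omega3_pow_less:
  assumes "finite X" "sparse (om_pow 3) X" "x \<in> X" "y \<in> X" "x < y"
  shows "x ^ x < y"
proof -
  have "large (om_pow 3) {x..<y}" using assms(2-5) unfolding sparse_def by blast
  then have "large_in {#3#} {x..<y}" using large_in_om_pow_iff by blast
  moreover have "Min X \<le> x" "3 < Min X" using assms(1-3) unfolding sparse_def by simp_all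
  then have "2 \<le> x" by simp
  ultimately show ?thesis by (rule omega3_large_interval_bound)
qed

subsection \<open>Groupings\<close>

definition end_homogeneous :: "nat \<Rightarrow> (nat \<Rightarrow> nat \<Rightarrow> nat) \<Rightarrow> (nat \<Rightarrow> nat set) \<Rightarrow> bool" where
  "end_homogeneous c P G \<longleftrightarrow>
     (\<forall>i j. i < j \<longrightarrow> j < c \<longrightarrow> (\<forall>x\<in>G i. \<forall>y\<in>G j. \<forall>y'\<in>G j. P x y = P x y'))"

text \<open>Colour each \<open>y \<in> E\<close> by the pattern \<open>x \<mapsto> P x y\<close> on the elements \<open>x\<close> of \<open>X\<close> below \<open>E\<close>: there
  are at most \<open>k ^ v \<le> v ^ v\<close> patterns, \<open>v\<close> the largest such \<open>x\<close>, and \<open>v ^ v < Min E\<close>.\<close>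

lemma end_homogeneous_sublarge:
  fixes P :: "nat \<Rightarrow> nat \<Rightarrow> nat"
  assumes "finite X" and growth: "\<forall>x\<in>X. \<forall>y\<in>X. x < y \<longrightarrow> x ^ x < y"
    and k: "0 < k" "\<forall>x\<in>X. k \<le> x" and P: "\<forall>x\<in>X. \<forall>y\<in>X. x < y \<longrightarrow> P x y < k"
    and E: "E \<subseteq> X" "large_in {#Suc m#} E"
  shows "\<exists>G\<subseteq>E. large_in {#m#} G \<and> (\<forall>x\<in>X. (\<forall>y\<in>E. x < y) \<longrightarrow> (\<forall>y\<in>G. \<forall>y'\<in>G. P x y = P x y'))"
proof -
  have "finite E" using E(1) assms(1) by (rule finite_subset)
  moreover have "E \<noteq> {}" using large_in_nonempty[OF E(2)] by simp
  ultimately have "Min E \<in> E" "\<forall>y\<in>E. Min E \<le> y" by simp_all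
  then have u: "Min E \<in> X" "\<forall>y\<in>E. Min E \<le> y" using E(1) by auto
  define S where "S = {x\<in>X. x < Min E}"
  have "finite S" unfolding S_def using assms(1) by simp
  have "k ^ card S \<le> Min E"
  proof (cases "S = {}")
    case True
    have "k \<le> Min E" using k(2) u(1) by blast
    with True k(1) show ?thesis by simp
  next
    case False
    define v where "v = Max S"
    have "v \<in> S" unfolding v_def using \<open>finite S\<close> False by simp
    then have v: "v \<in> X" "v < Min E" "k \<le> v" using k(2) unfolding S_def by auto
    have "S \<subseteq> {1..v}" using k \<open>finite S\<close> unfolding v_def S_def by (auto simp: Suc_le_eq)
    then have "card S \<le> v" using card_mono[of "{1..v}" S] by simp
    have "k ^ card S \<le> v ^ card S" using v(3) by (rule power_mono) simp
    also have "\<dots> \<le> v ^ v" using \<open>card S \<le> v\<close> v(3) k(1) by (intro power_increasing) auto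
    also have "\<dots> < Min E" using growth v u(1) by blast
    finally show ?thesis by simp
  qed
  then have bound: "\<forall>y\<in>E. k ^ card S \<le> y" using u(2) le_trans by blast
  have colours: "\<forall>s\<in>S. \<forall>y\<in>E. P s y < k"
  proof (intro ballI)
    fix s y assume "s \<in> S" "y \<in> E"
    then have "s \<in> X" "s < y" "y \<in> X" using u(2) E(1) unfolding S_def by fastforce+
    then show "P s y < k" using P by blast
  qed
  from large_in_pigeonhole_tuple[OF \<open>finite E\<close> E(2) \<open>finite S\<close> colours bound]
  obtain G where G: "G \<subseteq> E" "large_in {#m#} G" "\<forall>s\<in>S. \<forall>y\<in>G. \<forall>y'\<in>G. P s y = P s y'"
    by blast
  have "x \<in> S" if "x \<in> X" "\<forall>y\<in>E. x < y" for x
    using that \<open>E \<noteq> {}\<close> \<open>finite E\<close> unfolding S_def by simp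
  with G show ?thesis by blast
qed

lemma end_homogeneous_blocks:
  fixes P :: "nat \<Rightarrow> nat \<Rightarrow> nat"
  assumes "finite X" and growth: "\<forall>x\<in>X. \<forall>y\<in>X. x < y \<longrightarrow> x ^ x < y"
    and k: "0 < k" "\<forall>x\<in>X. k \<le> x" and P: "\<forall>x\<in>X. \<forall>y\<in>X. x < y \<longrightarrow> P x y < k"
    and E: "\<forall>j<c. E j \<subseteq> {x\<in>X. k < x} \<and> large_in {#Suc m#} (E j)" "increasing_blocks c E"
  shows "\<exists>G. (\<forall>j<c. G j \<subseteq> {x\<in>X. k < x} \<and> large_in {#m#} (G j)) \<and>
    increasing_blocks c G \<and> end_homogeneous c P G"
proof -
  have "\<forall>j<c. \<exists>G\<subseteq>E j. large_in {#m#} G \<and>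
      (\<forall>x\<in>X. (\<forall>y\<in>E j. x < y) \<longrightarrow> (\<forall>y\<in>G. \<forall>y'\<in>G. P x y = P x y'))"
  proof (intro allI impI)
    fix j assume "j < c"
    then have "E j \<subseteq> X" "large_in {#Suc m#} (E j)" using E(1) by blast+
    from end_homogeneous_sublarge[OF assms(1) growth k P this]
    show "\<exists>G\<subseteq>E j. large_in {#m#} G \<and>
      (\<forall>x\<in>X. (\<forall>y\<in>E j. x < y) \<longrightarrow> (\<forall>y\<in>G. \<forall>y'\<in>G. P x y = P x y'))" .
  qed
  then obtain G where G: "\<forall>j<c. G j \<subseteq> E j \<and> large_in {#m#} (G j) \<and>
      (\<forall>x\<in>X. (\<forall>y\<in>E j. x < y) \<longrightarrow> (\<forall>y\<in>G j. \<forall>y'\<in>G j. P x y = P x y'))"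
    unfolding choice_iff' ..
  note GE = G[rule_format, THEN conjunct1]
    and GL = G[rule_format, THEN conjunct2, THEN conjunct1]
    and Ghom = G[rule_format, THEN conjunct2, THEN conjunct2, rule_format]
  have "\<forall>j<c. G j \<subseteq> {x\<in>X. k < x} \<and> large_in {#m#} (G j)"
  proof (intro allI impI conjI)
    fix j assume j: "j < c"
    show "G j \<subseteq> {x\<in>X. k < x}" using GE[OF j] E(1)[rule_format, OF j] by blast
    show "large_in {#m#} (G j)" using GL[OF j] .
  qed
  moreover have "increasing_blocks c G" using increasing_blocks_subset[OF E(2) GE] .
  moreover have "end_homogeneous c P G"
    unfolding end_homogeneous_def
  proof (intro allI impI ballI)
    fix i j x y y' assume ij: "i < j" "j < c" and x: "x \<in> G i" and y: "y \<in> G j" "y' \<in> G j"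
    have "i < c" using ij by simp
    then have "x \<in> E i" using GE x by blast
    then have "x \<in> X" using E(1)[rule_format, OF \<open>i < c\<close>] by blast
    from Ghom[OF ij(2) this E(2)[unfolded increasing_blocks_def, rule_format, OF ij \<open>x \<in> E i\<close>] y]
    show "P x y = P x y'" .
  qed
  ultimately show ?thesis by blast
qed

text \<open>Colour each \<open>x \<in> G i\<close> by the tuple of colours \<open>P x (Min (G j))\<close>, \<open>i < j < c\<close>: there are at
  most \<open>k ^ c \<le> k ^ k < x\<close> such tuples.\<close>

lemma later_homogeneous_sublarge:
  fixes P :: "nat \<Rightarrow> nat \<Rightarrow> nat"
  assumes "finite X" and growth: "\<forall>x\<in>X. \<forall>y\<in>X. x < y \<longrightarrow> x ^ x < y"
    and k: "k \<in> X" "c \<le> k" and P: "\<forall>x\<in>X. \<forall>y\<in>X. x < y \<longrightarrow> P x y < k"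
    and G: "\<forall>i<c. G i \<subseteq> {x\<in>X. k < x} \<and> large_in {#Suc m#} (G i)" "increasing_blocks c G"
  shows "\<exists>F. \<forall>i<c. F i \<subseteq> G i \<and> large (om_pow m) (F i) \<and>
    (\<forall>j\<in>{i<..<c}. \<forall>x\<in>F i. \<forall>x'\<in>F i. P x (Min (G j)) = P x' (Min (G j)))"
proof -
  have GX: "G j \<subseteq> X" "finite (G j)" "Min (G j) \<in> G j" if "j < c" for j
  proof -
    show "G j \<subseteq> X" using G(1) that by blast
    then show "finite (G j)" using assms(1) by (rule finite_subset)
    have "large_in {#Suc m#} (G j)" using G(1) that by blast
    then have "G j \<noteq> {}" by (rule large_in_nonempty) simp
    with \<open>finite (G j)\<close> show "Min (G j) \<in> G j" by simp
  qed
  have "\<forall>i<c. \<exists>F\<subseteq>G i. large (om_pow m) F \<and>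
      (\<forall>j\<in>{i<..<c}. \<forall>x\<in>F. \<forall>x'\<in>F. P x (Min (G j)) = P x' (Min (G j)))"
  proof (intro allI impI)
    fix i assume i: "i < c"
    have colours: "\<forall>j\<in>{i<..<c}. \<forall>x\<in>G i. P x (Min (G j)) < k"
    proof (intro ballI)
      fix j x assume "j \<in> {i<..<c}" and x: "x \<in> G i"
      then have j: "i < j" "j < c" by auto
      then have "x < Min (G j)" using G(2) GX(3)[of j] x unfolding increasing_blocks_def by blast
      moreover have "x \<in> X" "Min (G j) \<in> X" using GX x i j by blast+
      ultimately show "P x (Min (G j)) < k" using P by blast
    qed
    have bound: "\<forall>x\<in>G i. k ^ card {i<..<c} \<le> x"
    proof
      fix x assume x: "x \<in> G i"
      have "k ^ card {i<..<c} \<le> k ^ k" using k(2) by (cases "k = 0") (auto intro!: power_increasing)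
      also have "\<dots> < x" using growth k(1) x G(1) i by blast
      finally show "k ^ card {i<..<c} \<le> x" by simp
    qed
    have "large_in {#Suc m#} (G i)" using G(1) i by blast
    from large_in_pigeonhole_tuple[OF GX(2)[OF i] this finite_greaterThanLessThan colours bound]
    obtain H where H: "H \<subseteq> G i" "large_in {#m#} H"
        "\<forall>j\<in>{i<..<c}. \<forall>x\<in>H. \<forall>x'\<in>H. P x (Min (G j)) = P x' (Min (G j))"
      by blast
    obtain F where "F \<subseteq> H" "large (om_pow m) F" using H(2) large_in_om_pow_iff by blast
    with H(1,3) show "\<exists>F\<subseteq>G i. large (om_pow m) F \<and>
        (\<forall>j\<in>{i<..<c}. \<forall>x\<in>F. \<forall>x'\<in>F. P x (Min (G j)) = P x' (Min (G j)))"
      by blast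
  qed
  then show ?thesis unfolding choice_iff' .
qed

lemma grouping_of_increasing_blocks:
  assumes "\<alpha> \<noteq> []" and F: "\<forall>i<c. F i \<subseteq> X \<and> large \<alpha> (F i)" "increasing_blocks c F"
    and P: "\<forall>i j. i < j \<longrightarrow> j < c \<longrightarrow> (\<forall>x\<in>F i. \<forall>x'\<in>F i. \<forall>y\<in>F j. \<forall>y'\<in>F j. P x y = P x' y')"
  shows "grouping \<alpha> (ord_nat c) P X F c"
proof -
  have ne: "finite (F i)" "F i \<noteq> {}" if "i < c" for i
    using F(1) that large_nonempty[OF _ assms(1)] unfolding large_def by auto
  have Max_Min: "Max (F i) < Min (F j)" if "i < j" "j < c" for i j
    using F(2) ne that unfolding increasing_blocks_def by (meson Max_in Min_in less_trans)
  have "strict_mono_on {..<c} (\<lambda>i. Max (F i))"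
  proof (rule strict_mono_onI)
    fix i j assume "i \<in> {..<c}" "j \<in> {..<c}" "i < j"
    then show "Max (F i) < Max (F j)"
      using Max_Min[of i j] ne[of j] Min_le[OF ne(1) Max_in[OF ne(1)]] by simp
  qed
  then have "card ((\<lambda>i. Max (F i)) ` {..<c}) = c"
    by (simp add: card_image strict_mono_on_imp_inj_on)
  then have "large (ord_nat c) ((\<lambda>i. Max (F i)) ` {..<c})"
    unfolding large_ord_nat_iff by simp
  then show ?thesis
    unfolding grouping_def using F(1) Max_Min P by (intro conjI) blast+
qed

lemma grouping_of_end_homogeneous:
  fixes P :: "nat \<Rightarrow> nat \<Rightarrow> nat"
  assumes "finite X" and growth: "\<forall>x\<in>X. \<forall>y\<in>X. x < y \<longrightarrow> x ^ x < y"
    and k: "k \<in> X" "c \<le> k" and P: "\<forall>x\<in>X. \<forall>y\<in>X. x < y \<longrightarrow> P x y < k"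
    and G: "\<forall>i<c. G i \<subseteq> {x\<in>X. k < x} \<and> large_in {#Suc m#} (G i)" "increasing_blocks c G"
      "end_homogeneous c P G"
  shows "\<exists>F. grouping (om_pow m) (ord_nat c) P X F c"
proof -
  from later_homogeneous_sublarge[OF assms(1) growth k P G(1,2)]
  obtain F where F: "\<forall>i<c. F i \<subseteq> G i \<and> large (om_pow m) (F i) \<and>
      (\<forall>j\<in>{i<..<c}. \<forall>x\<in>F i. \<forall>x'\<in>F i. P x (Min (G j)) = P x' (Min (G j)))" ..
  note FG = F[rule_format, THEN conjunct1]
    and FL = F[rule_format, THEN conjunct2, THEN conjunct1]
    and Fhom = F[rule_format, THEN conjunct2, THEN conjunct2, rule_format]
  have "grouping (om_pow m) (ord_nat c) P X F c"
  proof (rule grouping_of_increasing_blocks)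
    show "om_pow m \<noteq> []" unfolding om_pow_def by simp
    show "\<forall>i<c. F i \<subseteq> X \<and> large (om_pow m) (F i)" using FG FL G(1) by blast
    show "increasing_blocks c F" using increasing_blocks_subset[OF G(2) FG] .
    show "\<forall>i j. i < j \<longrightarrow> j < c \<longrightarrow> (\<forall>x\<in>F i. \<forall>x'\<in>F i. \<forall>y\<in>F j. \<forall>y'\<in>F j. P x y = P x' y')"
    proof (intro allI impI ballI)
      fix i j x x' y y' assume ij: "i < j" "j < c" and xs: "x \<in> F i" "x' \<in> F i" "y \<in> F j" "y' \<in> F j"
      then have i: "i < c" "j \<in> {i<..<c}" by auto
      have "G j \<noteq> {}" using xs(3) FG[OF ij(2)] by blast
      moreover have "G j \<subseteq> X" using G(1) ij(2) by blast
      then have "finite (G j)" using assms(1) by (rule finite_subset)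
      ultimately have Min: "Min (G j) \<in> G j" by simp
      have to_Min: "P v w = P v (Min (G j))" if "v \<in> F i" "w \<in> F j" for v w
      proof -
        have "v \<in> G i" "w \<in> G j" using FG[OF i(1)] FG[OF ij(2)] that by blast+
        from G(3)[unfolded end_homogeneous_def, rule_format, OF ij this Min] show ?thesis .
      qed
      have "P x y = P x (Min (G j))" using to_Min xs(1,3) .
      also have "\<dots> = P x' (Min (G j))" using Fhom[OF i xs(1,2)] .
      also have "\<dots> = P x' y'" using to_Min[OF xs(2,4)] by (rule sym)
      finally show "P x y = P x' y'" .
    qed
  qed
  then show ?thesis by blast
qed

theorem mainTheorem18:
  fixes X :: "nat set" and n c :: nat
  assumes "finite X"
    and "large (om_pow (n + 3)) X"
    and "sparse (om_pow 3) X"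
    and "c \<le> Min X"
  shows "admits_grouping (om_pow n) (ord_nat c) (Min X) X"
proof -
  define k where "k = Min X"
  have k: "k \<in> X" "\<forall>x\<in>X. k \<le> x" "c \<le> k"
    using assms(1,3,4) unfolding k_def sparse_def by auto
  have "0 < k" using assms(3) unfolding k_def sparse_def by simp
  have growth: "\<forall>x\<in>X. \<forall>y\<in>X. x < y \<longrightarrow> x ^ x < y"
    using sparse_omega3_pow_less[OF assms(1,3)] by blast
  have "large_in {#Suc (Suc (Suc n))#} X"
    using assms(2) large_in_om_pow_iff[of "n + 3" X] by (auto simp: numeral_3_eq_3)
  from large_in_blocks[OF large_in_Suc_above_Min[OF assms(1) this assms(4)]]
  obtain E where E: "\<forall>j<c. E j \<subseteq> {x\<in>X. k < x} \<and> large_in {#Suc (Suc n)#} (E j)"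
    "increasing_blocks c E"
    unfolding k_def by blast
  show ?thesis
    unfolding admits_grouping_def k_def[symmetric]
  proof (intro allI impI)
    fix P assume P: "\<forall>x\<in>X. \<forall>y\<in>X. x < y \<longrightarrow> P x y < k"
    from end_homogeneous_blocks[OF assms(1) growth \<open>0 < k\<close> k(2) P E]
    obtain G where "(\<forall>j<c. G j \<subseteq> {x\<in>X. k < x} \<and> large_in {#Suc n#} (G j)) \<and>
        increasing_blocks c G \<and> end_homogeneous c P G" ..
    with grouping_of_end_homogeneous[OF assms(1) growth k(1,3) P]
    show "\<exists>F l. grouping (om_pow n) (ord_nat c) P X F l" by blast
  qed
qed

end
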